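(* Let $0<r<\frac12$ and let $X\subseteq S^1$ be a finite subset. If $X$ is an $\varepsilon$-covering of $S^1$ for some $\varepsilon>0$, then $\mathrm{wf}_{<}(X;r)>r-2\varepsilon$.
   Context: $S^1$ is the circle of circumference $1$ with arc-length metric; points are identified with numbers in $[0,1)$ and $\vec d(x,y)$ is the clockwise distance from $x$ to $y$. $X$ is an $\varepsilon$-covering of $S^1$ if every point of $S^1$ is at distance less than $\varepsilon$ from some point of $X$. For finite $X$ and $0<r<\frac12$, $\overrightarrow{\mathbf{VR}}_{<}(X;r)$ is the directed graph on $X$ with $x_1\to x_2$ iff $0<\vec d(x_1,x_2)<r$, a cyclic graph with respect to the clockwise order of $X$, and $\mathrm{wf}_{<}(X;r)$ is its winding fraction: $\sup\{k/n:\exists$ cyclic homomorphism $\overrightarrow{C_n^k}\to\overrightarrow{\mathbf{VR}}_{<}(X;r)\}$. Here $\overrightarrow{C_n^k}$ ($0\le k<n/2$) has vertices $\{0,\dots,n-1\}$ with $i\to j$ iff $0<(j-i)\bmod n\le k$; a cyclic homomorphism between cyclic graphs (directed graphs with cyclic vertex orders $v_0\prec\cdots\prec v_{n-1}$ such that $v_i\to v_j$ implies $j=i+1$ or both $v_i\to v_{j-1}$, $v_{i+1}\to v_j$) is a vertex map that sends each edge $v\to w$ to an edge or a single vertex, whose fibres are cyclic intervals of consecutive vertices, which satisfies "$f(s)\prec f(s')\prec f(s'')$ in cyclic betweenness implies $s\prec s'\prec s''$", and which is non-constant if the source has a directed cycle. *)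

theory Defs
  imports Complex_Main
begin

text \<open>Points of the circle S^1 (circumference 1) are reals in [0,1).
  Clockwise distance from x to y.\<close>
definition cw_dist :: "real \<Rightarrow> real \<Rightarrow> real" where
  "cw_dist x y = frac (y - x)"

definition circ_dist :: "real \<Rightarrow> real \<Rightarrow> real" where
  "circ_dist x y = min (cw_dist x y) (cw_dist y x)"

definition eps_covering :: "real set \<Rightarrow> real \<Rightarrow> bool" where
  "eps_covering X \<epsilon> \<longleftrightarrow> (\<forall>p. 0 \<le> p \<and> p < 1 \<longrightarrow> (\<exists>x\<in>X. circ_dist p x < \<epsilon>))"

text \<open>Cyclic graphs are represented on vertex set {0..<N}, with cyclic order
  0 < 1 < ... < N-1 (then back to 0), and an edge relation E.\<close>

text \<open>Strict cyclic betweenness a < b < c in the cyclic order on {0..<N}.\<close>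
definition cbtw :: "nat \<Rightarrow> nat \<Rightarrow> nat \<Rightarrow> nat \<Rightarrow> bool" where
  "cbtw N a b c \<longleftrightarrow> a < N \<and> b < N \<and> c < N \<and> a \<noteq> b \<and> b \<noteq> c \<and> a \<noteq> c \<and>
     (b + N - a) mod N < (c + N - a) mod N"

definition cyc_interval :: "nat \<Rightarrow> nat set \<Rightarrow> bool" where
  "cyc_interval N S \<longleftrightarrow> (\<exists>a<N. \<exists>l\<le>N. S = {(a + i) mod N | i. i < l})"

definition has_dcycle :: "nat \<Rightarrow> (nat \<Rightarrow> nat \<Rightarrow> bool) \<Rightarrow> bool" where
  "has_dcycle N E \<longleftrightarrow> (\<exists>v<N. (\<lambda>a b. a < N \<and> b < N \<and> E a b)\<^sup>+\<^sup>+ v v)"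

definition cyclic_hom ::
  "nat \<Rightarrow> (nat \<Rightarrow> nat \<Rightarrow> bool) \<Rightarrow> nat \<Rightarrow> (nat \<Rightarrow> nat \<Rightarrow> bool) \<Rightarrow> (nat \<Rightarrow> nat) \<Rightarrow> bool" where
  "cyclic_hom N E M F f \<longleftrightarrow>
     (\<forall>s<N. f s < M) \<and>
     (\<forall>v<N. \<forall>w<N. E v w \<longrightarrow> F (f v) (f w) \<or> f v = f w) \<and>
     (\<forall>y<M. cyc_interval N {s. s < N \<and> f s = y}) \<and>
     (\<forall>s<N. \<forall>s'<N. \<forall>s''<N. cbtw M (f s) (f s') (f s'') \<longrightarrow> cbtw N s s' s'') \<and>
     (has_dcycle N E \<longrightarrow> (\<exists>s<N. \<exists>s'<N. f s \<noteq> f s'))"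

definition Cnk_edge :: "nat \<Rightarrow> nat \<Rightarrow> nat \<Rightarrow> nat \<Rightarrow> bool" where
  "Cnk_edge n k i j \<longleftrightarrow> 0 < (j + n - i) mod n \<and> (j + n - i) mod n \<le> k"

text \<open>The directed Vietoris-Rips graph VR_<(X;r): vertex i is the i-th point of X
  in clockwise (increasing) order.\<close>
definition vr_edge :: "real set \<Rightarrow> real \<Rightarrow> nat \<Rightarrow> nat \<Rightarrow> bool" where
  "vr_edge X r i j \<longleftrightarrow>
     (let xs = sorted_list_of_set X in
        0 < cw_dist (xs ! i) (xs ! j) \<and> cw_dist (xs ! i) (xs ! j) < r)"

definition winding_fraction :: "real set \<Rightarrow> real \<Rightarrow> real" where
  "winding_fraction X r = Sup {real k / real n | k n. 2 * k < n \<and>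
      (\<exists>f. cyclic_hom n (Cnk_edge n k) (card X) (vr_edge X r) f)}"

end

theory Submission
  imports Defs
begin

text \<open>If the covering is \<open>\<epsilon>\<close>-dense, every point of \<open>X\<close> has its clockwise successor within
  some \<open>\<delta> < 2\<epsilon>\<close>: the midpoint of a longer empty arc would be \<open>\<epsilon>\<close>-far from \<open>X\<close>.
  Place \<open>n\<close> equally spaced grid points \<open>min X + i/n\<close> on the circle and send \<open>i\<close> to the last
  point of \<open>X\<close> at or before the \<open>i\<close>-th grid point. This map is monotone and every grid point
  lies less than \<open>\<delta>\<close> past its image, so grid points at most \<open>k/n \<le> r - \<delta>\<close> apart go to points
  less than \<open>r\<close> apart: a cyclic homomorphism \<open>C\<^sub>n\<^sup>k \<rightarrow> VR(X; r)\<close>.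
  With \<open>n\<close> large and \<open>k = \<lfloor>(r - \<delta>) n\<rfloor>\<close> its ratio \<open>k/n\<close> exceeds \<open>r - 2\<epsilon>\<close>.\<close>

lemma add_diff_mod_eq_if:
  assumes "(a::nat) < N" "b < N"
  shows "(b + N - a) mod N = (if a \<le> b then b - a else b + N - a)"
proof (cases "a \<le> b")
  case True
  then have "b + N - a = (b - a) + N" by arith
  moreover have "b - a < N" using assms by arith
  ultimately show ?thesis using True by (metis mod_add_self2 mod_less)
qed (use assms in simp)

lemma cbtw_iff:
  "cbtw N a b c \<longleftrightarrow> a < N \<and> b < N \<and> c < N \<and>
     ((a < b \<and> b < c) \<or> (b < c \<and> c < a) \<or> (c < a \<and> a < b))"
  unfolding cbtw_def
  by (cases "a < N \<and> b < N \<and> c < N") (simp_all add: add_diff_mod_eq_if, auto)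

lemma cyc_interval_empty: "0 < N \<Longrightarrow> cyc_interval N {}"
  unfolding cyc_interval_def by auto

lemma cyc_interval_atLeastAtMost:
  assumes "a \<le> b" "b < N"
  shows "cyc_interval N {a..b}"
proof -
  have "{a..b} = {(a + i) mod N | i. i < b - a + 1}"
  proof (intro set_eqI iffI)
    fix s assume "s \<in> {a..b}"
    then have "s = (a + (s - a)) mod N" "s - a < b - a + 1" using assms by auto
    then show "s \<in> {(a + i) mod N | i. i < b - a + 1}" by blast
  next
    fix s assume "s \<in> {(a + i) mod N | i. i < b - a + 1}"
    then obtain i where "s = (a + i) mod N" "i < b - a + 1" by blast
    moreover have "a + i < N" using \<open>i < b - a + 1\<close> assms by linarith
    ultimately show "s \<in> {a..b}" using assms by auto
  qed
  moreover have "a < N" "b - a + 1 \<le> N" using assms by auto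
  ultimately show ?thesis unfolding cyc_interval_def by blast
qed

lemma mono_fibre_cyc_interval:
  fixes f :: "nat \<Rightarrow> nat"
  assumes mono: "\<And>i j. i \<le> j \<Longrightarrow> j < N \<Longrightarrow> f i \<le> f j" and "0 < N"
  shows "cyc_interval N {s. s < N \<and> f s = y}"
proof -
  define S where "S = {s. s < N \<and> f s = y}"
  have "finite S" unfolding S_def by simp
  consider "S = {}" | "Min S \<in> S" "Max S \<in> S"
    using Min_in[OF \<open>finite S\<close>] Max_in[OF \<open>finite S\<close>] by blast
  then have "cyc_interval N S"
  proof cases
    case 2
    then have lo: "Min S < N" "f (Min S) = y" and hi: "Max S < N" "f (Max S) = y"
      unfolding S_def by auto
    have "{Min S..Max S} \<subseteq> S"
    proof
      fix s assume "s \<in> {Min S..Max S}"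
      then have "s < N" "f (Min S) \<le> f s" "f s \<le> f (Max S)"
        using hi mono[of "Min S" s] mono[of s "Max S"] by auto
      then show "s \<in> S" using lo hi unfolding S_def by auto
    qed
    moreover have "S \<subseteq> {Min S..Max S}" using \<open>finite S\<close> by auto
    ultimately have "S = {Min S..Max S}" by blast
    moreover have "Min S \<le> Max S" using 2 \<open>finite S\<close> by auto
    ultimately show ?thesis using cyc_interval_atLeastAtMost hi by metis
  qed (use cyc_interval_empty \<open>0 < N\<close> in simp)
  then show ?thesis unfolding S_def .
qed

lemma cyclic_hom_of_mono:
  assumes "0 < N" and into: "\<And>s. s < N \<Longrightarrow> f s < M"
    and mono: "\<And>i j. i \<le> j \<Longrightarrow> j < N \<Longrightarrow> f i \<le> f j"
    and edges: "\<And>v w. v < N \<Longrightarrow> w < N \<Longrightarrow> E v w \<Longrightarrow> F (f v) (f w) \<or> f v = f w"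
    and nonconst: "s\<^sub>1 < N" "s\<^sub>2 < N" "f s\<^sub>1 \<noteq> f s\<^sub>2"
  shows "cyclic_hom N E M F f"
proof -
  have less: "i < j" if "f i < f j" "i < N" for i j
    using mono[of j i] that by (meson not_le)
  have cbtw: "cbtw N s s' s''"
    if "cbtw M (f s) (f s') (f s'')" "s < N" "s' < N" "s'' < N" for s s' s''
    using that less[of s s'] less[of s' s''] less[of s'' s] unfolding cbtw_iff by auto
  show ?thesis
    unfolding cyclic_hom_def
  proof (intro conjI)
    show "\<forall>y<M. cyc_interval N {s. s < N \<and> f s = y}"
      using mono_fibre_cyc_interval[where f = f, OF mono \<open>0 < N\<close>] by blast
    show "\<forall>s<N. \<forall>s'<N. \<forall>s''<N. cbtw M (f s) (f s') (f s'') \<longrightarrow> cbtw N s s' s''"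
      using cbtw by blast
    show "\<forall>s<N. f s < M" using into by blast
    show "\<forall>v<N. \<forall>w<N. E v w \<longrightarrow> F (f v) (f w) \<or> f v = f w" using edges by blast
    show "has_dcycle N E \<longrightarrow> (\<exists>s<N. \<exists>s'<N. f s \<noteq> f s')" using nonconst by blast
  qed
qed

lemma cyclic_hom_C1_const:
  assumes "0 < M"
  shows "cyclic_hom 1 (Cnk_edge 1 0) M F (\<lambda>_. 0)"
proof -
  have "\<not> has_dcycle 1 (Cnk_edge 1 0)"
    unfolding has_dcycle_def Cnk_edge_def by (auto dest: tranclpD)
  moreover have "cyc_interval 1 {s. s < 1 \<and> 0 = y}" for y :: nat
    using cyc_interval_empty[of 1] cyc_interval_atLeastAtMost[of 0 0 1]
    by (cases "y = 0") auto
  ultimately show ?thesis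
    using assms unfolding cyclic_hom_def by (auto simp: cbtw_def)
qed

lemma winding_fraction_ge:
  assumes "2 * k < n" "cyclic_hom n (Cnk_edge n k) (card X) (vr_edge X r) f"
  shows "real k / real n \<le> winding_fraction X r"
  unfolding winding_fraction_def
proof (rule cSup_upper)
  show "real k / real n \<in> {real k / real n | k n. 2 * k < n \<and>
      (\<exists>f. cyclic_hom n (Cnk_edge n k) (card X) (vr_edge X r) f)}"
    using assms by blast
  show "bdd_above {real k / real n | k n. 2 * k < n \<and>
      (\<exists>f. cyclic_hom n (Cnk_edge n k) (card X) (vr_edge X r) f)}"
    by (rule bdd_aboveI[of _ "1/2"]) (auto simp: field_simps)
qed

lemma cw_dist_eq_if:
  assumes "a \<in> {0..<1}" "b \<in> {0..<1}"
  shows "cw_dist a b = (if a \<le> b then b - a else b - a + 1)"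
  using frac_diff_pos[of a b] frac_diff_neg[of b a] assms unfolding cw_dist_def by auto

lemma cw_dist_pos:
  assumes "a \<in> {0..<1}" "b \<in> {0..<1}" "a \<noteq> b"
  shows "0 < cw_dist a b"
  using cw_dist_eq_if[OF assms(1,2)] assms by auto

text \<open>The midpoint of an arc of length \<open>g\<close> free of points of \<open>X\<close> has distance at least
  \<open>g / 2\<close> from \<open>X\<close>.\<close>
lemma eps_covering_gap_lt:
  assumes cov: "eps_covering X \<epsilon>" and "a \<in> X"
    and gap: "\<And>x. x \<in> X \<Longrightarrow> x \<noteq> a \<Longrightarrow> g \<le> cw_dist a x" and "0 < g" "g < 1"
  shows "g < 2 * \<epsilon>"
proof -
  define p where "p = frac (a + g / 2)"
  have "0 \<le> p" "p < 1" unfolding p_def by (auto simp: frac_lt_1)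
  then obtain x where "x \<in> X" and close: "circ_dist p x < \<epsilon>"
    using cov unfolding eps_covering_def by blast
  define u where "u = cw_dist a x"
  have frac_frac_diff: "frac (frac y - z) = frac (y - z)" for y z :: real
    using frac_add_simps(1)[of y "- z"] by simp
  have to_x: "cw_dist p x = frac (u - g / 2)" and from_x: "cw_dist x p = frac (g / 2 - u)"
    unfolding cw_dist_def p_def u_def frac_diff_simp frac_frac_diff by (simp_all add: algebra_simps)
  have "g / 2 \<le> frac (u - g / 2) \<and> g / 2 \<le> frac (g / 2 - u)"
  proof (cases "x = a")
    case True
    then have "u = 0" unfolding u_def cw_dist_def by simp
    moreover have "frac (- (g / 2)) = 1 - g / 2"
      using \<open>0 < g\<close> \<open>g < 1\<close> by (simp add: frac_unique_iff)
    ultimately show ?thesis using \<open>0 < g\<close> \<open>g < 1\<close> by (simp add: frac_eq)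
  next
    case False
    then have "g \<le> u" "u < 1" using gap \<open>x \<in> X\<close> frac_lt_1 unfolding u_def cw_dist_def by auto
    moreover have "frac (g / 2 - u) = g / 2 - u + 1"
      using calculation \<open>0 < g\<close> by (simp add: frac_unique_iff)
    ultimately show ?thesis using \<open>0 < g\<close> by (simp add: frac_eq)
  qed
  then show ?thesis using close unfolding circ_dist_def to_x from_x by linarith
qed

lemma eps_covering_nonempty: "eps_covering X \<epsilon> \<Longrightarrow> X \<noteq> {}"
  unfolding eps_covering_def by force

lemma eps_covering_successor_bound:
  assumes fin: "finite X" and sub: "X \<subseteq> {0..<1}"
    and cov: "eps_covering X \<epsilon>" and "\<epsilon> \<le> 1/4"
  shows "\<exists>\<delta>. 0 \<le> \<delta> \<and> \<delta> < 2 * \<epsilon> \<and> (\<forall>a\<in>X. \<exists>y\<in>X. y \<noteq> a \<and> cw_dist a y \<le> \<delta>)"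
proof -
  have successor: "\<exists>y\<in>X. y \<noteq> a \<and> cw_dist a y < 2 * \<epsilon>" if "a \<in> X" for a
  proof -
    have "X - {a} \<noteq> {}"
    proof
      assume "X - {a} = {}"
      then have "1/2 < 2 * \<epsilon>" by (intro eps_covering_gap_lt[OF cov \<open>a \<in> X\<close>]) auto
      then show False using \<open>\<epsilon> \<le> 1/4\<close> by simp
    qed
    define d where "d = Min (cw_dist a ` (X - {a}))"
    have "d \<in> cw_dist a ` (X - {a})"
      unfolding d_def using fin \<open>X - {a} \<noteq> {}\<close> by (intro Min_in) auto
    then obtain y where "y \<in> X" "y \<noteq> a" "d = cw_dist a y" by auto
    moreover have "d \<le> cw_dist a x" if "x \<in> X" "x \<noteq> a" for x
      unfolding d_def using fin that by simp
    moreover have "0 < d"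
      using calculation cw_dist_pos[of a y] subsetD[OF sub] \<open>a \<in> X\<close> by simp
    moreover have "d < 1" using \<open>d = cw_dist a y\<close> frac_lt_1 unfolding cw_dist_def by simp
    ultimately show ?thesis using eps_covering_gap_lt[OF cov \<open>a \<in> X\<close>, of d] by metis
  qed
  then obtain nxt
    where nxt: "\<And>a. a \<in> X \<Longrightarrow> nxt a \<in> X \<and> nxt a \<noteq> a \<and> cw_dist a (nxt a) < 2 * \<epsilon>"
    by metis
  define \<delta> where "\<delta> = Max ((\<lambda>a. cw_dist a (nxt a)) ` X)"
  have "\<delta> < 2 * \<epsilon>"
    unfolding \<delta>_def using fin eps_covering_nonempty[OF cov] nxt by simp
  moreover have le_\<delta>: "cw_dist a (nxt a) \<le> \<delta>" if "a \<in> X" for a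
    unfolding \<delta>_def using fin that by simp
  moreover have "0 \<le> \<delta>"
    using le_\<delta> eps_covering_nonempty[OF cov] frac_ge_0 unfolding cw_dist_def
    by (meson all_not_in_conv order_trans)
  ultimately show ?thesis using nxt by blast
qed

lemma rational_approx_below:
  fixes c \<eta> :: real
  assumes "0 \<le> c" "c < 1/2" "0 < \<eta>"
  shows "\<exists>k n. 2 \<le> n \<and> 2 * k < n \<and> real k / real n \<le> c \<and> c - \<eta> < real k / real n"
proof -
  obtain m where m: "inverse (real (Suc m)) < \<eta>"
    using reals_Archimedean[OF \<open>0 < \<eta>\<close>] by blast
  define n where "n = Suc (Suc m)"
  have "0 < real n" unfolding n_def by simp
  have "1 / real n \<le> inverse (real (Suc m))" unfolding n_def by (simp add: field_simps)
  then have "1 / real n < \<eta>" using m by linarith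
  define k where "k = nat \<lfloor>c * real n\<rfloor>"
  have "real k = of_int \<lfloor>c * real n\<rfloor>"
    unfolding k_def using \<open>0 \<le> c\<close> \<open>0 < real n\<close> by simp
  then have k_le: "real k \<le> c * real n" and k_gt: "c * real n - 1 < real k" by linarith+
  have "2 * k < n"
  proof -
    have "c * real n < real n / 2" using \<open>c < 1/2\<close> \<open>0 < real n\<close> by simp
    then show ?thesis using k_le by linarith
  qed
  moreover have "real k / real n \<le> c" using k_le \<open>0 < real n\<close> by (simp add: field_simps)
  moreover have "c - \<eta> < real k / real n"
  proof -
    have "(c * real n - 1) / real n < real k / real n"
      using k_gt \<open>0 < real n\<close> by (simp add: divide_strict_right_mono)
    then show ?thesis using \<open>0 < real n\<close> \<open>1 / real n < \<eta>\<close> by (simp add: diff_divide_distrib)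
  qed
  moreover have "2 \<le> n" unfolding n_def by simp
  ultimately show ?thesis by blast
qed

locale circle_grid =
  fixes X :: "real set" and \<delta> :: real and n :: nat
  assumes finite_X: "finite X" and X_sub: "X \<subseteq> {0..<1}" and X_ne: "X \<noteq> {}"
    and successor: "\<And>a. a \<in> X \<Longrightarrow> \<exists>y\<in>X. y \<noteq> a \<and> cw_dist a y \<le> \<delta>"
    and n_pos: "0 < n"
begin

abbreviation pt :: "nat \<Rightarrow> real" where
  "pt j \<equiv> sorted_list_of_set X ! j"

definition grid :: "nat \<Rightarrow> real" where
  "grid i = Min X + real i / real n"

definition last_below :: "nat \<Rightarrow> nat" where
  "last_below i = Max {j. j < card X \<and> pt j \<le> grid i}"

lemma pt_in: "j < card X \<Longrightarrow> pt j \<in> X"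
  using finite_X by (metis length_sorted_list_of_set nth_mem set_sorted_list_of_set)

lemma pt_range: "j < card X \<Longrightarrow> pt j \<in> {0..<1}"
  using pt_in X_sub by blast

lemma pt_less_iff: "i < card X \<Longrightarrow> j < card X \<Longrightarrow> pt i < pt j \<longleftrightarrow> i < j"
  using sorted_wrt_nth_less[OF strict_sorted_list_of_set, of i j X]
    sorted_wrt_nth_less[OF strict_sorted_list_of_set, of j i X] finite_X
  by (metis length_sorted_list_of_set linorder_neqE_nat order_less_asym)

lemma pt_le_iff: "i < card X \<Longrightarrow> j < card X \<Longrightarrow> pt i \<le> pt j \<longleftrightarrow> i \<le> j"
  using pt_less_iff by (meson not_le)

lemma pt_surj: "x \<in> X \<Longrightarrow> \<exists>j < card X. pt j = x"
  using finite_X by (metis in_set_conv_nth length_sorted_list_of_set set_sorted_list_of_set)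

lemma pt_0: "pt 0 = Min X"
  using sorted_list_of_set_nonempty[OF finite_X X_ne] by simp

lemma card_pos: "0 < card X"
  using finite_X X_ne by (simp add: card_gt_0_iff)

lemma grid_mono: "i \<le> i' \<Longrightarrow> grid i \<le> grid i'"
  unfolding grid_def by (simp add: divide_right_mono)

lemma last_below:
  shows last_below_less: "last_below i < card X"
    and pt_last_below_le: "pt (last_below i) \<le> grid i"
proof -
  have "0 \<in> {j. j < card X \<and> pt j \<le> grid i}"
    using card_pos pt_0 grid_mono[of 0 i] by (simp add: grid_def)
  then have "last_below i \<in> {j. j < card X \<and> pt j \<le> grid i}"
    unfolding last_below_def by (intro Max_in) auto
  then show "last_below i < card X" "pt (last_below i) \<le> grid i" by auto
qed

lemma le_last_below: "j < card X \<Longrightarrow> pt j \<le> grid i \<Longrightarrow> j \<le> last_below i"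
  unfolding last_below_def by (intro Max_ge) auto

lemma last_below_mono: "i \<le> i' \<Longrightarrow> last_below i \<le> last_below i'"
  using le_last_below last_below_less pt_last_below_le grid_mono by (meson order_trans)

lemma last_below_0: "last_below 0 = 0"
  using pt_last_below_le[of 0] pt_le_iff[OF last_below_less card_pos] pt_0
  by (simp add: grid_def)

text \<open>The successor of the image lies beyond the grid point, possibly after wrapping around.\<close>
lemma grid_less_last_below:
  assumes "i < n"
  shows "grid i < pt (last_below i) + \<delta>"
proof -
  define a where "a = pt (last_below i)"
  have "a \<in> X" unfolding a_def using pt_in last_below_less by blast
  then obtain y where "y \<in> X" "y \<noteq> a" and "cw_dist a y \<le> \<delta>" using successor by blast
  obtain j where j: "j < card X" "pt j = y" using pt_surj[OF \<open>y \<in> X\<close>] by blast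
  have cw: "cw_dist a y = (if a \<le> y then y - a else y - a + 1)"
    using cw_dist_eq_if \<open>a \<in> X\<close> \<open>y \<in> X\<close> X_sub by blast
  have "grid i < a + cw_dist a y"
  proof (cases "a \<le> y")
    case True
    then have "a < y" using \<open>y \<noteq> a\<close> by simp
    then have "\<not> pt j \<le> grid i"
      using le_last_below[OF j(1)] pt_less_iff[OF last_below_less j(1)] j(2)
      unfolding a_def by fastforce
    then show ?thesis using True j(2) cw by simp
  next
    case False
    have "real i / real n < 1" using assms n_pos by simp
    then have "grid i < y + 1" using Min_le[OF finite_X \<open>y \<in> X\<close>] unfolding grid_def by simp
    then show ?thesis using False cw by simp
  qed
  then show ?thesis using \<open>cw_dist a y \<le> \<delta>\<close> unfolding a_def by simp
qed

lemma cw_dist_last_below: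
  assumes "v < n" "w < n" and ne: "last_below v \<noteq> last_below w"
  shows "0 < cw_dist (pt (last_below v)) (pt (last_below w))"
    and "cw_dist (pt (last_below v)) (pt (last_below w)) < real ((w + n - v) mod n) / real n + \<delta>"
proof -
  define a b where "a = pt (last_below v)" and "b = pt (last_below w)"
  have "a \<in> {0..<1}" "b \<in> {0..<1}" unfolding a_def b_def using pt_range last_below_less by auto
  have "a \<noteq> b"
    unfolding a_def b_def using ne pt_le_iff[OF last_below_less last_below_less]
    by (metis order.antisym order_refl)
  then show "0 < cw_dist a b" using cw_dist_pos \<open>a \<in> _\<close> \<open>b \<in> _\<close> by blast
  have lag: "grid v < a + \<delta>" "b \<le> grid w"
    unfolding a_def b_def using grid_less_last_below[OF \<open>v < n\<close>] pt_last_below_le by auto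
  have "grid w - grid v = (real w - real v) / real n"
    unfolding grid_def by (simp add: diff_divide_distrib)
  show "cw_dist a b < real ((w + n - v) mod n) / real n + \<delta>"
  proof (cases "v \<le> w")
    case True
    then have "a \<le> b" unfolding a_def b_def using last_below_mono pt_le_iff last_below_less by blast
    moreover have "real ((w + n - v) mod n) = real w - real v"
      using True add_diff_mod_eq_if[OF assms(1,2)] by (simp add: of_nat_diff)
    ultimately show ?thesis
      using cw_dist_eq_if[OF \<open>a \<in> _\<close> \<open>b \<in> _\<close>] lag \<open>grid w - grid v = _\<close> by simp
  next
    case False
    then have "b \<le> a" unfolding a_def b_def
      using last_below_mono[of w v] pt_le_iff[OF last_below_less last_below_less] by simp
    then have "b < a" using \<open>a \<noteq> b\<close> by simp
    moreover have "real ((w + n - v) mod n) = real w - real v + real n"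
      using False add_diff_mod_eq_if[OF assms(1,2)] assms by (simp add: of_nat_diff)
    ultimately show ?thesis
      using cw_dist_eq_if[OF \<open>a \<in> _\<close> \<open>b \<in> _\<close>] lag \<open>grid w - grid v = _\<close> n_pos
      by (simp add: add_divide_distrib)
  qed
qed

lemma last_below_nonconst:
  assumes "2 \<le> n" "\<delta> < 1/2"
  shows "last_below (n - 1) \<noteq> last_below 0"
proof -
  obtain y where "y \<in> X" "y \<noteq> Min X" "cw_dist (Min X) y \<le> \<delta>"
    using successor Min_in[OF finite_X X_ne] by blast
  moreover have "Min X \<le> y" using Min_le[OF finite_X \<open>y \<in> X\<close>] .
  ultimately have "y - Min X \<le> \<delta>"
    using cw_dist_eq_if Min_in[OF finite_X X_ne] X_sub by (metis subsetD)
  moreover have "1/2 \<le> real (n - 1) / real n" using assms(1) by (simp add: of_nat_diff field_simps)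
  ultimately have "y \<le> grid (n - 1)" unfolding grid_def using assms(2) by linarith
  obtain j where "j < card X" "pt j = y" using pt_surj[OF \<open>y \<in> X\<close>] by blast
  then have "j \<le> last_below (n - 1)" using le_last_below \<open>y \<le> grid (n - 1)\<close> by blast
  moreover have "j \<noteq> 0" using \<open>pt j = y\<close> \<open>y \<noteq> Min X\<close> pt_0 by metis
  ultimately show ?thesis using last_below_0 by simp
qed

lemma cyclic_hom_last_below:
  assumes "2 \<le> n" "\<delta> < 1/2" "real k / real n \<le> r - \<delta>"
  shows "cyclic_hom n (Cnk_edge n k) (card X) (vr_edge X r) last_below"
proof (rule cyclic_hom_of_mono)
  fix v w assume "v < n" "w < n" "Cnk_edge n k v w"
  then have "real ((w + n - v) mod n) / real n \<le> real k / real n"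
    unfolding Cnk_edge_def by (simp add: divide_right_mono)
  then show "vr_edge X r (last_below v) (last_below w) \<or> last_below v = last_below w"
    using cw_dist_last_below[OF \<open>v < n\<close> \<open>w < n\<close>] assms(3)
    unfolding vr_edge_def Let_def by fastforce
next
  show "last_below (n - 1) \<noteq> last_below 0" using last_below_nonconst assms by blast
qed (use n_pos last_below_less last_below_mono in auto)

end

theorem proposition5p2:
  fixes X :: "real set" and r \<epsilon> :: real
  assumes "0 < r" and "r < 1/2"
    and "finite X" and "X \<subseteq> {0..<1}"
    and "0 < \<epsilon>" and "eps_covering X \<epsilon>"
  shows "winding_fraction X r > r - 2 * \<epsilon>"
proof (cases "r < 2 * \<epsilon>")
  case True
  have "0 < card X" using assms(3,6) eps_covering_nonempty by (simp add: card_gt_0_iff)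
  then have "real 0 / real 1 \<le> winding_fraction X r"
    using winding_fraction_ge[OF _ cyclic_hom_C1_const] by simp
  then show ?thesis using True by simp
next
  case False
  then obtain \<delta> where "0 \<le> \<delta>" "\<delta> < 2 * \<epsilon>"
    and successor: "\<forall>a\<in>X. \<exists>y\<in>X. y \<noteq> a \<and> cw_dist a y \<le> \<delta>"
    using eps_covering_successor_bound[OF assms(3,4,6)] \<open>r < 1/2\<close> by fastforce
  obtain k n where "2 \<le> n" "2 * k < n" "real k / real n \<le> r - \<delta>" "r - 2 * \<epsilon> < real k / real n"
    using rational_approx_below[of "r - \<delta>" "2 * \<epsilon> - \<delta>"] False \<open>0 \<le> \<delta>\<close> \<open>\<delta> < 2 * \<epsilon>\<close> \<open>r < 1/2\<close>
    by auto
  interpret circle_grid X \<delta> n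
    using assms(3,4,6) successor \<open>2 \<le> n\<close> eps_covering_nonempty by unfold_locales auto
  have "cyclic_hom n (Cnk_edge n k) (card X) (vr_edge X r) last_below"
    using cyclic_hom_last_below \<open>2 \<le> n\<close> \<open>real k / real n \<le> r - \<delta>\<close> False \<open>\<delta> < 2 * \<epsilon>\<close> \<open>r < 1/2\<close>
    by simp
  then show ?thesis using winding_fraction_ge \<open>2 * k < n\<close> \<open>r - 2 * \<epsilon> < _\<close> by fastforce
qed

end
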